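(* Let $f_{ijk}$ be a triangle face with radii $r_i,r_j,r_k>0$ at its vertices and inversive distances $a=I_{jk}$, $b=I_{ki}$, $c=I_{ij}$, all $>1$, and suppose the edge lengths $l_{ij}=\sqrt{r_i^2+r_j^2+2I_{ij}r_ir_j}$ (and similarly $l_{jk},l_{ki}$) satisfy the triangle inequality. Realize $f_{ijk}$ as a Euclidean triangle in $\mathbb{E}^2$ with these side lengths, and let $\rho_{ijk}$ be the radius of the unique circle orthogonal to the three circles centered at $v_i,v_j,v_k$ with radii $r_i,r_j,r_k$. Then \[r_ir_jr_k\sqrt{\Delta_{abc}}=2\rho_{ijk}\operatorname{Area}(f_{ijk}),\qquad \Delta_{abc}=a^2+b^2+c^2+2abc-1.\]
   Context: The inversive distance of two circles with radii $r_1,r_2$ whose centers are at distance $l$ is $(l^2-r_1^2-r_2^2)/(2r_1r_2)$. *)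

theory Defs
  imports "HOL-Analysis.Analysis"
begin

definition circles_orthogonal :: "real ^ 2 \<Rightarrow> real \<Rightarrow> real ^ 2 \<Rightarrow> real \<Rightarrow> bool" where
  "circles_orthogonal p r q s \<longleftrightarrow> (dist p q)\<^sup>2 = r\<^sup>2 + s\<^sup>2"

definition edge_len :: "real \<Rightarrow> real \<Rightarrow> real \<Rightarrow> real" where
  "edge_len r1 r2 I = sqrt (r1\<^sup>2 + r2\<^sup>2 + 2 * I * r1 * r2)"

end

theory Submission
  imports Defs "HOL-Analysis.Simplex_Content"
begin

text \<open>Put the centre of the orthogonal circle at the origin and let \<open>x\<^sub>i = v\<^sub>i - ctr\<close>.
  Orthogonality gives \<open>\<rho>\<^sup>2 - x\<^sub>i \<bullet> x\<^sub>i = -r\<^sub>i\<^sup>2\<close>, and together with the edge lengths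
  \<open>\<rho>\<^sup>2 - x\<^sub>i \<bullet> x\<^sub>j = I\<^sub>i\<^sub>j r\<^sub>i r\<^sub>j\<close>. So the matrix \<open>(\<rho>\<^sup>2 - x\<^sub>i \<bullet> x\<^sub>j)\<close> is
  \<open>diag r \<cdot> M \<cdot> diag r\<close> with \<open>M = [[-1,c,b],[c,-1,a],[b,a,-1]]\<close>, whose determinant is
  \<open>\<Delta>\<^sub>a\<^sub>b\<^sub>c\<close>. On the other hand it is the Gram matrix of the vectors \<open>(1, x\<^sub>i)\<close> for the
  quadratic form \<open>diag(\<rho>\<^sup>2, -1, -1)\<close>, so its determinant is \<open>\<rho>\<^sup>2 det[1 x\<^sub>i]\<^sup>2\<close>, and
  \<open>\<bar>det[1 x\<^sub>i]\<bar>\<close> is twice the area of the triangle.\<close>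

definition sym_det3 :: "real \<Rightarrow> real \<Rightarrow> real \<Rightarrow> real \<Rightarrow> real \<Rightarrow> real \<Rightarrow> real" where
  "sym_det3 p q r x y z = p * q * r + 2 * x * y * z - p * x\<^sup>2 - q * y\<^sup>2 - r * z\<^sup>2"
  \<comment> \<open>the determinant of \<open>[[p, z, y], [z, q, x], [y, x, r]]\<close>\<close>

lemma sym_det3_inversive:
  "sym_det3 (- ri\<^sup>2) (- rj\<^sup>2) (- rk\<^sup>2) (a * rj * rk) (b * rk * ri) (c * ri * rj)
     = (ri * rj * rk)\<^sup>2 * (a\<^sup>2 + b\<^sup>2 + c\<^sup>2 + 2 * a * b * c - 1)"
  unfolding sym_det3_def by algebra

lemma sym_det3_lorentz_gram:
  fixes ctr x y z :: "real ^ 2" and \<rho> :: real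
  shows "sym_det3
           (\<rho>\<^sup>2 - (x - ctr) \<bullet> (x - ctr)) (\<rho>\<^sup>2 - (y - ctr) \<bullet> (y - ctr)) (\<rho>\<^sup>2 - (z - ctr) \<bullet> (z - ctr))
           (\<rho>\<^sup>2 - (y - ctr) \<bullet> (z - ctr)) (\<rho>\<^sup>2 - (z - ctr) \<bullet> (x - ctr)) (\<rho>\<^sup>2 - (x - ctr) \<bullet> (y - ctr))
         = \<rho>\<^sup>2 * ((z $ 1 - x $ 1) * (y $ 2 - x $ 2) - (y $ 1 - x $ 1) * (z $ 2 - x $ 2))\<^sup>2"
  unfolding sym_det3_def inner_vec_def sum_2 by (simp add: power2_eq_square) algebra

lemma edge_len_squared:
  assumes "r1 \<ge> 0" "r2 \<ge> 0" "I \<ge> -1"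
  shows "(edge_len r1 r2 I)\<^sup>2 = r1\<^sup>2 + r2\<^sup>2 + 2 * I * r1 * r2"
proof -
  have "-1 * r1 * r2 \<le> I * r1 * r2"
    using assms by (intro mult_right_mono) auto
  then have "0 \<le> (r1 - r2)\<^sup>2 + 2 * (I * r1 * r2 + r1 * r2)"
    by simp
  then show ?thesis
    unfolding edge_len_def by (simp add: power2_eq_square algebra_simps)
qed

lemma circles_orthogonal_inner_self:
  assumes "circles_orthogonal ctr \<rho> p r"
  shows "\<rho>\<^sup>2 - (p - ctr) \<bullet> (p - ctr) = - r\<^sup>2"
proof -
  have "(dist p ctr)\<^sup>2 = \<rho>\<^sup>2 + r\<^sup>2"
    using assms by (simp add: circles_orthogonal_def dist_commute)
  then show ?thesis
    by (simp add: dist_norm power2_norm_eq_inner)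
qed

lemma circles_orthogonal_inner:
  assumes "circles_orthogonal ctr \<rho> p r" "circles_orthogonal ctr \<rho> q s"
    and "(dist p q)\<^sup>2 = r\<^sup>2 + s\<^sup>2 + 2 * I * r * s"
  shows "\<rho>\<^sup>2 - (p - ctr) \<bullet> (q - ctr) = I * r * s"
proof -
  have "(dist p q)\<^sup>2 = (p - ctr) \<bullet> (p - ctr) + (q - ctr) \<bullet> (q - ctr) - 2 * ((p - ctr) \<bullet> (q - ctr))"
    by (simp add: dist_norm power2_norm_eq_inner inner_commute algebra_simps)
  then show ?thesis
    using assms circles_orthogonal_inner_self[OF assms(1)] circles_orthogonal_inner_self[OF assms(2)]
    by (simp add: dist_commute)
qed

lemma measure_lebesgue_triangle:
  fixes A B C :: "real ^ 2"
  shows "measure lebesgue (convex hull {A, B, C}) =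
           \<bar>(C $ 1 - A $ 1) * (B $ 2 - A $ 2) - (B $ 1 - A $ 1) * (C $ 2 - A $ 2)\<bar> / 2"
proof -
  have "compact (convex hull {A, B, C})"
    by (intro finite_imp_compact_convex_hull) auto
  then have "measure lebesgue (convex hull {A, B, C}) = measure lborel (convex hull {A, B, C})"
    by (intro measure_completion) (auto dest: compact_imp_closed)
  then show ?thesis
    by (simp add: content_triangle)
qed

theorem theorem4p1:
  fixes ri rj rk a b c \<rho> :: real and vi vj vk ctr :: "real ^ 2"
  assumes radii: "ri > 0" "rj > 0" "rk > 0"
    and inv: "a > 1" "b > 1" "c > 1"
    and tri: "edge_len ri rj c < edge_len rj rk a + edge_len rk ri b"
             "edge_len rj rk a < edge_len rk ri b + edge_len ri rj c"
             "edge_len rk ri b < edge_len ri rj c + edge_len rj rk a"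
    and real: "dist vi vj = edge_len ri rj c" "dist vj vk = edge_len rj rk a"
              "dist vk vi = edge_len rk ri b"
    and circ: "\<rho> > 0" "circles_orthogonal ctr \<rho> vi ri"
              "circles_orthogonal ctr \<rho> vj rj" "circles_orthogonal ctr \<rho> vk rk"
  shows "ri * rj * rk * sqrt (a\<^sup>2 + b\<^sup>2 + c\<^sup>2 + 2 * a * b * c - 1)
           = 2 * \<rho> * measure lebesgue (convex hull {vi, vj, vk})"
proof -
  define D where "D = (vk $ 1 - vi $ 1) * (vj $ 2 - vi $ 2) - (vj $ 1 - vi $ 1) * (vk $ 2 - vi $ 2)"
  have ij: "\<rho>\<^sup>2 - (vi - ctr) \<bullet> (vj - ctr) = c * ri * rj"
    using real(1) circ(2,3) radii inv
    by (intro circles_orthogonal_inner) (simp_all add: edge_len_squared)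
  have jk: "\<rho>\<^sup>2 - (vj - ctr) \<bullet> (vk - ctr) = a * rj * rk"
    using real(2) circ(3,4) radii inv
    by (intro circles_orthogonal_inner) (simp_all add: edge_len_squared)
  have ki: "\<rho>\<^sup>2 - (vk - ctr) \<bullet> (vi - ctr) = b * rk * ri"
    using real(3) circ(4,2) radii inv
    by (intro circles_orthogonal_inner) (simp_all add: edge_len_squared)
  have gram: "(ri * rj * rk)\<^sup>2 * (a\<^sup>2 + b\<^sup>2 + c\<^sup>2 + 2 * a * b * c - 1) = (\<rho> * D)\<^sup>2"
    using sym_det3_lorentz_gram[of \<rho> vi ctr vj vk]
    unfolding circles_orthogonal_inner_self[OF circ(2)] circles_orthogonal_inner_self[OF circ(3)]
      circles_orthogonal_inner_self[OF circ(4)] ij jk ki sym_det3_inversive D_def[symmetric]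
    by (simp only: power_mult_distrib)
  have "ri * rj * rk * sqrt (a\<^sup>2 + b\<^sup>2 + c\<^sup>2 + 2 * a * b * c - 1)
      = sqrt ((ri * rj * rk)\<^sup>2 * (a\<^sup>2 + b\<^sup>2 + c\<^sup>2 + 2 * a * b * c - 1))"
    using radii by (simp add: real_sqrt_mult)
  also have "\<dots> = \<rho> * \<bar>D\<bar>"
    using gram circ(1) by (simp add: abs_mult)
  finally show ?thesis
    by (simp add: measure_lebesgue_triangle D_def)
qed

end
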